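(* Let $A$ be a finite-dimensional semisimple associative algebra over $\mathbb{C}$, $G$ a finite group of automorphisms of $A$, and $M$ a finite-dimensional simple $A$-module with inertia subgroup $G_M$, isomorphisms $\phi(h)$ and 2-cocycle $\alpha_M$ as in the context. Then for every $\gamma\in J_{M,\alpha_M}$, the multiplicity space $M_\gamma$ is a simple $A^G$-module.
   Context: For an $A$-module $M$ and $h\in G$, ${}^hM$ denotes $M$ with $A$-action $a*_hm=h^{-1}(a)m$. The inertia subgroup is $G_M=\{h\in G: {}^hM\cong M \text{ as } A\text{-modules}\}$. For each $h\in G_M$ fix a linear bijection $\phi(h)$ of $M$ with $\phi(h)a=h(a)\phi(h)$ for all $a\in A$, $\phi(1)=1_M$; then $\phi(h)\phi(k)=\alpha_M(h,k)\phi(hk)$ for a 2-cocycle $\alpha_M$ (values roots of unity). $\mathbb{C}^{\alpha_M}[G_M]$ is the twisted group algebra with basis $\bar h$ and $\bar h\bar k=\alpha_M(h,k)\overline{hk}$; $M$ is a $\mathbb{C}^{\alpha_M}[G_M]$-module via $\bar h\mapsto\phi(h)$. $J_{M,\alpha_M}$ is the set of irreducible characters $\lambda$ of $\mathbb{C}^{\alpha_M}[G_M]$ whose simple module $W_\lambda$ occurs in $M$. Fixing a nonzero $w\in W_\lambda$, $M_\lambda=\{f(w): f\in\mathrm{Hom}_{\mathbb{C}^{\alpha_M}[G_M]}(W_\lambda,M)\}\subseteq M$, which is stable under $A^G=\{a\in A: g(a)=a\ \forall g\in G\}$. *)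

theory Defs
  imports Complex_Main
begin

text \<open>A complex vector space is an abelian-group type together with a
scalar multiplication s :: complex => 'v => 'v satisfying the library locale
vector_space s. The whole type plays the role of the space.\<close>

definition fin_dim :: "(complex \<Rightarrow> 'v::ab_group_add \<Rightarrow> 'v) \<Rightarrow> bool" where
  "fin_dim s \<longleftrightarrow> vector_space s \<and> (\<exists>B. finite B \<and> module.span s B = UNIV)"

definition complex_algebra :: "(complex \<Rightarrow> 'a::ring_1 \<Rightarrow> 'a) \<Rightarrow> bool" where
  "complex_algebra sA \<longleftrightarrow> vector_space sA \<and>
     (\<forall>c x y. sA c (x * y) = sA c x * y \<and> sA c (x * y) = x * sA c y)"

definition left_ideal :: "(complex \<Rightarrow> 'a::ring_1 \<Rightarrow> 'a) \<Rightarrow> 'a set \<Rightarrow> bool" where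
  "left_ideal sA L \<longleftrightarrow> module.subspace sA L \<and> (\<forall>a x. x \<in> L \<longrightarrow> a * x \<in> L)"

definition semisimple_algebra :: "(complex \<Rightarrow> 'a::ring_1 \<Rightarrow> 'a) \<Rightarrow> bool" where
  "semisimple_algebra sA \<longleftrightarrow> complex_algebra sA \<and> fin_dim sA \<and>
     (\<forall>L. left_ideal sA L \<longrightarrow>
        (\<exists>L'. left_ideal sA L' \<and> L \<inter> L' = {0} \<and> {x + y | x y. x \<in> L \<and> y \<in> L'} = UNIV))"

definition algebra_aut :: "(complex \<Rightarrow> 'a::ring_1 \<Rightarrow> 'a) \<Rightarrow> ('a \<Rightarrow> 'a) \<Rightarrow> bool" where
  "algebra_aut sA g \<longleftrightarrow> bij g \<and> g 1 = 1 \<and>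
     (\<forall>x y. g (x + y) = g x + g y \<and> g (x * y) = g x * g y) \<and>
     (\<forall>c x. g (sA c x) = sA c (g x))"

definition aut_group :: "(complex \<Rightarrow> 'a::ring_1 \<Rightarrow> 'a) \<Rightarrow> ('a \<Rightarrow> 'a) set \<Rightarrow> bool" where
  "aut_group sA G \<longleftrightarrow> finite G \<and> id \<in> G \<and> (\<forall>g\<in>G. algebra_aut sA g) \<and>
     (\<forall>g\<in>G. \<forall>h\<in>G. g \<circ> h \<in> G) \<and> (\<forall>g\<in>G. inv g \<in> G)"

definition A_module :: "(complex \<Rightarrow> 'a::ring_1 \<Rightarrow> 'a) \<Rightarrow> (complex \<Rightarrow> 'm::ab_group_add \<Rightarrow> 'm)
    \<Rightarrow> ('a \<Rightarrow> 'm \<Rightarrow> 'm) \<Rightarrow> bool" where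
  "A_module sA sM act \<longleftrightarrow> vector_space sM \<and>
     (\<forall>a. Vector_Spaces.linear sM sM (act a)) \<and> act 1 = id \<and>
     (\<forall>a b. act (a * b) = act a \<circ> act b) \<and>
     (\<forall>a b m. act (a + b) m = act a m + act b m) \<and>
     (\<forall>c a m. act (sA c a) m = sM c (act a m))"

definition simple_over :: "(complex \<Rightarrow> 'm::ab_group_add \<Rightarrow> 'm) \<Rightarrow> ('a \<Rightarrow> 'm \<Rightarrow> 'm)
    \<Rightarrow> 'a set \<Rightarrow> 'm set \<Rightarrow> bool" where
  "simple_over sM act R S \<longleftrightarrow> module.subspace sM S \<and> (\<forall>a\<in>R. \<forall>m\<in>S. act a m \<in> S) \<and>
     S \<noteq> {0} \<and>
     (\<forall>N. N \<subseteq> S \<longrightarrow> module.subspace sM N \<longrightarrow> (\<forall>a\<in>R. \<forall>m\<in>N. act a m \<in> N) \<longrightarrow>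
          N = {0} \<or> N = S)"

definition fixed_alg :: "('a \<Rightarrow> 'a) set \<Rightarrow> 'a set" where
  "fixed_alg G = {a. \<forall>g\<in>G. g a = a}"

text \<open>Inertia subgroup: h in G such that the twisted module hM (action a *_h m =
inv h a m) is isomorphic to M as A-module.\<close>
definition inertia :: "(complex \<Rightarrow> 'm::ab_group_add \<Rightarrow> 'm) \<Rightarrow> ('a \<Rightarrow> 'm \<Rightarrow> 'm)
    \<Rightarrow> ('a \<Rightarrow> 'a) set \<Rightarrow> ('a \<Rightarrow> 'a) set" where
  "inertia sM act G = {h \<in> G. \<exists>f. Vector_Spaces.linear sM sM f \<and> bij f \<and>
       (\<forall>a m. f (act (inv h a) m) = act a (f m))}"

text \<open>A module over the twisted group algebra C^alpha[H]: the basis element h-bar acts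
by the linear map rho h; the algebra relations h-bar k-bar = alpha(h,k) (hk)-bar
and 1-bar = identity element.\<close>
definition twisted_module :: "(complex \<Rightarrow> 'w::ab_group_add \<Rightarrow> 'w) \<Rightarrow> (('a \<Rightarrow> 'a) \<Rightarrow> 'w \<Rightarrow> 'w)
    \<Rightarrow> ('a \<Rightarrow> 'a) set \<Rightarrow> (('a \<Rightarrow> 'a) \<Rightarrow> ('a \<Rightarrow> 'a) \<Rightarrow> complex) \<Rightarrow> bool" where
  "twisted_module sW \<rho> H \<alpha> \<longleftrightarrow> vector_space sW \<and>
     (\<forall>h\<in>H. Vector_Spaces.linear sW sW (\<rho> h)) \<and> \<rho> id = id \<and>
     (\<forall>h\<in>H. \<forall>k\<in>H. \<forall>w. \<rho> h (\<rho> k w) = sW (\<alpha> h k) (\<rho> (h \<circ> k) w))"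

definition simple_twisted_module :: "(complex \<Rightarrow> 'w::ab_group_add \<Rightarrow> 'w) \<Rightarrow> (('a \<Rightarrow> 'a) \<Rightarrow> 'w \<Rightarrow> 'w)
    \<Rightarrow> ('a \<Rightarrow> 'a) set \<Rightarrow> (('a \<Rightarrow> 'a) \<Rightarrow> ('a \<Rightarrow> 'a) \<Rightarrow> complex) \<Rightarrow> bool" where
  "simple_twisted_module sW \<rho> H \<alpha> \<longleftrightarrow> twisted_module sW \<rho> H \<alpha> \<and> fin_dim sW \<and>
     (UNIV :: 'w set) \<noteq> {0} \<and>
     (\<forall>N. module.subspace sW N \<longrightarrow> (\<forall>h\<in>H. \<forall>w\<in>N. \<rho> h w \<in> N) \<longrightarrow> N = {0} \<or> N = UNIV)"

definition twisted_hom :: "(complex \<Rightarrow> 'w::ab_group_add \<Rightarrow> 'w) \<Rightarrow> (complex \<Rightarrow> 'm::ab_group_add \<Rightarrow> 'm)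
    \<Rightarrow> (('a \<Rightarrow> 'a) \<Rightarrow> 'w \<Rightarrow> 'w) \<Rightarrow> (('a \<Rightarrow> 'a) \<Rightarrow> 'm \<Rightarrow> 'm) \<Rightarrow> ('a \<Rightarrow> 'a) set
    \<Rightarrow> ('w \<Rightarrow> 'm) \<Rightarrow> bool" where
  "twisted_hom sW sM \<rho> \<phi> H f \<longleftrightarrow> Vector_Spaces.linear sW sM f \<and>
     (\<forall>h\<in>H. \<forall>w. f (\<rho> h w) = \<phi> h (f w))"

definition mult_space :: "(complex \<Rightarrow> 'w::ab_group_add \<Rightarrow> 'w) \<Rightarrow> (complex \<Rightarrow> 'm::ab_group_add \<Rightarrow> 'm)
    \<Rightarrow> (('a \<Rightarrow> 'a) \<Rightarrow> 'w \<Rightarrow> 'w) \<Rightarrow> (('a \<Rightarrow> 'a) \<Rightarrow> 'm \<Rightarrow> 'm) \<Rightarrow> ('a \<Rightarrow> 'a) set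
    \<Rightarrow> 'w \<Rightarrow> 'm set" where
  "mult_space sW sM \<rho> \<phi> H w = {f w | f. twisted_hom sW sM \<rho> \<phi> H f}"

end

theory Submission
  imports Defs "HOL-Computational_Algebra.Fundamental_Theorem_Algebra"
begin

text \<open>Let N be a nonzero A^G-submodule of M_w. It contains some f0(w) with f0 a nonzero, hence
injective, homomorphism W \<rightarrow> M. Let Q be the two-sided ideal of those b \<in> A with g(b) M = 0 for
all g \<notin> G_M. Semisimplicity embeds M into A as a left ideal, and by the definition of G_M the
image lies in Q, so Q acts nontrivially on M. The Jacobson density theorem (resting on Schur's
lemma, i.e. on eigenvalues over \<complex>) then gives, for any other homomorphism f, some b \<in> Q with
b \<circ> f0 = f. The average a of the g(b), g \<in> G, lies in A^G, and a f0(w) = f(w): each h \<in> G_M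
contributes f(w), because \<phi>(h) intertwines b with h(b), and the other terms vanish.
Hence f(w) \<in> N for every f, i.e. N = M_w.\<close>

section \<open>Eigenvectors over the complex numbers\<close>

lemma fin_dim_finite_dimensional:
  assumes "fin_dim s"
  obtains B where "finite_dimensional_vector_space s B"
proof -
  interpret vector_space s using assms unfolding fin_dim_def by blast
  obtain B0 where B0: "finite B0" "span B0 = UNIV" using assms unfolding fin_dim_def by blast
  obtain B where B: "B \<subseteq> B0" "independent B" "B0 \<subseteq> span B"
    using maximal_independent_subset by blast
  have "finite_dimensional_vector_space s B"
  proof
    show "finite B" using B(1) B0(1) finite_subset by blast
    show "span B = UNIV" using B(3) B0(2) span_mono span_span by blast
  qed (fact B(2))
  then show thesis by (rule that)
qed

lemma (in vector_space) finite_family_dependent: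
  assumes "finite B" "span B = UNIV" "card B \<le> n"
  shows "\<exists>c. (\<exists>k\<le>n. c k \<noteq> 0) \<and> (\<Sum>k\<le>n. scale (c k) (f k)) = 0"
proof (cases "inj_on f {..n}")
  case True
  have "dependent (f ` {..n})"
  proof (rule ccontr)
    assume "\<not> dependent (f ` {..n})"
    from independent_span_bound[OF assms(1) this] assms(2,3) True show False
      by (simp add: card_image)
  qed
  then obtain u where u: "\<exists>y\<in>f ` {..n}. u y \<noteq> 0" "(\<Sum>y\<in>f ` {..n}. scale (u y) y) = 0"
    using dependent_finite[of "f ` {..n}"] by auto
  then show ?thesis
    by (intro exI[of _ "u \<circ> f"]) (auto simp: sum.reindex[OF True])
next
  case False
  then obtain i j where ij: "i \<le> n" "j \<le> n" "i \<noteq> j" "f i = f j"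
    unfolding inj_on_def by auto
  define c :: "nat \<Rightarrow> 'a" where "c k = (if k = i then 1 else if k = j then -1 else 0)" for k
  have "(\<Sum>k\<le>n. scale (c k) (f k)) = (\<Sum>k\<in>{i, j}. scale (c k) (f k))"
    by (rule sum.mono_neutral_right) (use ij in \<open>auto simp: c_def\<close>)
  also have "\<dots> = 0" using ij by (simp add: c_def)
  finally show ?thesis using ij by (intro exI[of _ c]) (auto simp: c_def)
qed

definition poly_op :: "(complex \<Rightarrow> 'v::ab_group_add \<Rightarrow> 'v) \<Rightarrow> ('v \<Rightarrow> 'v) \<Rightarrow> complex poly \<Rightarrow> 'v \<Rightarrow> 'v" where
  "poly_op s T p x = (\<Sum>k\<le>degree p. s (coeff p k) ((T^^k) x))"

lemma poly_op_eq_sum_atMost: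
  assumes "vector_space s" and "degree p \<le> N"
  shows "poly_op s T p x = (\<Sum>k\<le>N. s (coeff p k) ((T^^k) x))"
proof -
  interpret vector_space s by fact
  show ?thesis unfolding poly_op_def
    by (rule sum.mono_neutral_left) (use assms(2) in \<open>auto simp: coeff_eq_0\<close>)
qed

lemma poly_op_linear_factor:
  assumes vs: "vector_space s" and lin: "Vector_Spaces.linear s s T"
  shows "poly_op s T ([:-r, 1:] * q) x = T (poly_op s T q x) - s r (poly_op s T q x)"
proof -
  interpret vector_space s by fact
  interpret T: Vector_Spaces.linear s s T by fact
  let ?N = "Suc (degree q)"
  have dg: "degree ([:-r, 1:] * q) \<le> ?N"
    using degree_mult_le[of "[:-r, 1:]" q] by simp
  have "poly_op s T ([:-r, 1:] * q) x = (\<Sum>k\<le>?N. s (coeff ([:-r, 1:] * q) k) ((T^^k) x))"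
    by (rule poly_op_eq_sum_atMost[OF vs dg])
  also have "\<dots> = (\<Sum>k\<le>?N. s (coeff (pCons 0 q) k) ((T^^k) x))
      - (\<Sum>k\<le>?N. s r (s (coeff q k) ((T^^k) x)))"
    unfolding mult_pCons_left by (simp add: sum.distrib algebra_simps sum_subtractf)
  also have "(\<Sum>k\<le>?N. s r (s (coeff q k) ((T^^k) x))) = s r (poly_op s T q x)"
    by (subst poly_op_eq_sum_atMost[OF vs, of q ?N])
      (simp_all add: scale_sum_right del: sum.atMost_Suc)
  also have "(\<Sum>k\<le>?N. s (coeff (pCons 0 q) k) ((T^^k) x))
      = (\<Sum>k\<le>degree q. s (coeff q k) ((T^^Suc k) x))"
    by (subst sum.atMost_Suc_shift) simp
  also have "\<dots> = T (poly_op s T q x)"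
    by (simp add: poly_op_def T.sum T.scale)
  finally show ?thesis .
qed

text \<open>Write p = (X - r) q by the fundamental theorem of algebra: either q(T) x = 0 and we recurse,
or q(T) x is an eigenvector for r.\<close>
lemma poly_op_annihilator_imp_eigenvector:
  assumes vs: "vector_space s" and lin: "Vector_Spaces.linear s s T"
  shows "p \<noteq> 0 \<Longrightarrow> x \<noteq> 0 \<Longrightarrow> poly_op s T p x = 0 \<Longrightarrow> \<exists>l u. u \<noteq> 0 \<and> T u = s l u"
proof (induction "degree p" arbitrary: p x rule: less_induct)
  case less
  interpret vector_space s by fact
  show ?case
  proof (cases "degree p = 0")
    case True
    then have "poly_op s T p x = s (coeff p 0) x" by (simp add: poly_op_def)
    moreover have "coeff p 0 \<noteq> 0" using True less.prems(1) leading_coeff_0_iff by fastforce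
    ultimately show ?thesis using less.prems by simp
  next
    case False
    have "\<exists>z. poly p z = 0"
      by (rule fundamental_theorem_of_algebra_alt) (use False in auto)
    then obtain r where "poly p r = 0" by blast
    then obtain q where pq: "p = [:-r, 1:] * q" using poly_eq_0_iff_dvd by (metis dvdE)
    have q0: "q \<noteq> 0" using pq less.prems(1) by auto
    have "degree p = degree [:-r, 1:] + degree q"
      unfolding pq by (rule degree_mult_eq) (use q0 in auto)
    then have dq: "degree q < degree p" by simp
    have eigen: "T (poly_op s T q x) = s r (poly_op s T q x)"
      using poly_op_linear_factor[OF vs lin, of r q x] pq less.prems(3) by simp
    show ?thesis
    proof (cases "poly_op s T q x = 0")
      case True
      then show ?thesis using less.hyps[OF dq q0 less.prems(2)] by blast
    next
      case False
      then show ?thesis using eigen by blast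
    qed
  qed
qed

lemma exists_eigenvector:
  fixes s :: "complex \<Rightarrow> 'v::ab_group_add \<Rightarrow> 'v"
  assumes vs: "vector_space s" and lin: "Vector_Spaces.linear s s T" and fd: "fin_dim s"
    and nontrivial: "(UNIV :: 'v set) \<noteq> {0}"
  shows "\<exists>l u. u \<noteq> 0 \<and> T u = s l u"
proof -
  interpret vector_space s by fact
  obtain v :: 'v where v: "v \<noteq> 0" using nontrivial by blast
  obtain B where B: "finite B" "span B = UNIV" using fd unfolding fin_dim_def by blast
  obtain c where c: "\<exists>k\<le>card B. c k \<noteq> 0" "(\<Sum>k\<le>card B. s (c k) ((T^^k) v)) = 0"
    using finite_family_dependent[OF B order_refl, of "\<lambda>k. (T^^k) v"] by blast
  define p where "p = (\<Sum>k\<le>card B. monom (c k) k)"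
  have coeff_p: "coeff p k = (if k \<le> card B then c k else 0)" for k
    unfolding p_def coeff_sum by (simp add: coeff_monom)
  have "degree p \<le> card B" by (rule degree_le) (simp add: coeff_p)
  then have "poly_op s T p v = (\<Sum>k\<le>card B. s (c k) ((T^^k) v))"
    by (simp add: poly_op_eq_sum_atMost[OF vs] coeff_p)
  then have "poly_op s T p v = 0" using c(2) by simp
  moreover have "p \<noteq> 0"
  proof
    assume "p = 0"
    then have "c k = 0" if "k \<le> card B" for k using coeff_p[of k] that by simp
    with c(1) show False by blast
  qed
  ultimately show ?thesis using poly_op_annihilator_imp_eigenvector[OF vs lin] v by blast
qed

section \<open>Simple modules: Schur's lemma and the density theorem\<close>

definition two_sided_ideal :: "(complex \<Rightarrow> 'a::ring_1 \<Rightarrow> 'a) \<Rightarrow> 'a set \<Rightarrow> bool" where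
  "two_sided_ideal sA I \<longleftrightarrow> left_ideal sA I \<and> (\<forall>a x. x \<in> I \<longrightarrow> x * a \<in> I)"

locale simple_module =
  fixes sA :: "complex \<Rightarrow> 'a::ring_1 \<Rightarrow> 'a" and sM :: "complex \<Rightarrow> 'm::ab_group_add \<Rightarrow> 'm"
    and act :: "'a \<Rightarrow> 'm \<Rightarrow> 'm"
  assumes algebra: "complex_algebra sA" and A_module: "A_module sA sM act"
    and fin_dim: "fin_dim sM" and simple: "simple_over sM act UNIV UNIV"
begin

sublocale A: vector_space sA
  using algebra unfolding complex_algebra_def by blast

lemma left_idealD:
  assumes "left_ideal sA L"
  shows "0 \<in> L" "x \<in> L \<Longrightarrow> y \<in> L \<Longrightarrow> x + y \<in> L" "x \<in> L \<Longrightarrow> sA c x \<in> L"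
    "x \<in> L \<Longrightarrow> a * x \<in> L" "x \<in> L \<Longrightarrow> y \<in> L \<Longrightarrow> x - y \<in> L"
  using assms A.subspace_diff unfolding left_ideal_def A.subspace_def by blast+

sublocale M: vector_space sM
  using A_module unfolding A_module_def by blast

lemma act_linear: "Vector_Spaces.linear sM sM (act a)"
  using A_module unfolding A_module_def by blast

sublocale act: Vector_Spaces.linear sM sM "act a"
  by (rule act_linear)

lemma linear_endoI:
  "(\<And>x y. T (x + y) = T x + T y) \<Longrightarrow> (\<And>c x. T (sM c x) = sM c (T x)) \<Longrightarrow>
    Vector_Spaces.linear sM sM T"
  unfolding Vector_Spaces.linear_iff using M.vector_space_axioms by blast

lemma act_add_left: "act (a + b) m = act a m + act b m"
  using A_module unfolding A_module_def by blast

lemma act_zero_left [simp]: "act 0 m = 0"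
  by (metis act_add_left add_cancel_right_right add_0)

lemma act_diff_left: "act (a - b) m = act a m - act b m"
  by (metis act_add_left add_diff_cancel diff_add_cancel)

lemma act_mult: "act (a * b) m = act a (act b m)"
  using A_module unfolding A_module_def by (simp add: comp_def)

lemma act_one [simp]: "act 1 m = m"
  using A_module unfolding A_module_def by simp

lemma act_scale_left: "act (sA c a) m = sM c (act a m)"
  using A_module unfolding A_module_def by blast

lemma act_sum_left: "act (sum f S) m = (\<Sum>s\<in>S. act (f s) m)"
  by (induction S rule: infinite_finite_induct) (simp_all add: act_add_left)

lemma submodule_trivial:
  "M.subspace N \<Longrightarrow> \<forall>a. \<forall>m\<in>N. act a m \<in> N \<Longrightarrow> N = {0} \<or> N = UNIV"
  using simple unfolding simple_over_def by blast

lemma nontrivial: "(UNIV :: 'm set) \<noteq> {0}"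
  using simple unfolding simple_over_def by auto

lemma schur:
  assumes lin: "Vector_Spaces.linear sM sM T" and comm: "\<And>a m. T (act a m) = act a (T m)"
  shows "\<exists>l. \<forall>m. T m = sM l m"
proof -
  interpret T: Vector_Spaces.linear sM sM T by fact
  obtain l u where lu: "u \<noteq> 0" "T u = sM l u"
    using exists_eigenvector[OF M.vector_space_axioms lin fin_dim nontrivial] by blast
  let ?E = "{m. T m = sM l m}"
  have "M.subspace ?E"
    by (auto simp: M.subspace_def T.add T.scale M.scale_right_distrib M.scale_left_commute)
  moreover have "\<forall>a. \<forall>m\<in>?E. act a m \<in> ?E"
    by (simp add: comm act.scale)
  moreover have "?E \<noteq> {0}" using lu by auto
  ultimately have "?E = UNIV" using submodule_trivial by blast
  then show ?thesis by auto
qed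

lemma orbit_left_ideal:
  assumes L: "left_ideal sA L" and nz: "b \<in> L" "act b v \<noteq> 0"
  shows "(\<lambda>a. act a v) ` L = UNIV"
proof -
  let ?O = "(\<lambda>a. act a v) ` L"
  have sub: "M.subspace ?O"
  proof (rule M.subspaceI)
    show "0 \<in> ?O" by (rule image_eqI[of _ _ 0]) (simp_all add: left_idealD(1)[OF L])
  next
    fix x y assume "x \<in> ?O" "y \<in> ?O"
    then obtain a b where "a \<in> L" "b \<in> L" "x = act a v" "y = act b v" by blast
    then show "x + y \<in> ?O"
      by (intro image_eqI[of _ _ "a + b"]) (simp_all add: act_add_left left_idealD(2)[OF L])
  next
    fix c x assume "x \<in> ?O"
    then obtain a where "a \<in> L" "x = act a v" by blast
    then show "sM c x \<in> ?O"
      by (intro image_eqI[of _ _ "sA c a"]) (simp_all add: act_scale_left left_idealD(3)[OF L])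
  qed
  have stable: "\<forall>c. \<forall>x\<in>?O. act c x \<in> ?O"
  proof (intro allI ballI)
    fix c x assume "x \<in> ?O"
    then obtain a where "a \<in> L" "x = act a v" by blast
    then show "act c x \<in> ?O"
      by (intro image_eqI[of _ _ "c * a"]) (simp_all add: act_mult left_idealD(4)[OF L])
  qed
  have "?O \<noteq> {0}" using nz by blast
  with submodule_trivial[OF sub stable] show ?thesis by blast
qed

lemma annihilator_left_ideal: "left_ideal sA {a. \<forall>s\<in>S. act a s = 0}"
  unfolding left_ideal_def A.subspace_def by (simp add: act_add_left act_scale_left act_mult)

text \<open>The map a u \<mapsto> a x is well defined on the orbit of u and commutes with the action,
so by Schur's lemma it is a scalar.\<close>
lemma left_ideal_proportional:
  assumes L: "left_ideal sA L" and orbit: "(\<lambda>a. act a u) ` L = UNIV"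
    and kills: "\<And>a. a \<in> L \<Longrightarrow> act a u = 0 \<Longrightarrow> act a x = 0"
  shows "\<exists>l. \<forall>a\<in>L. act a x = sM l (act a u)"
proof -
  have well_def: "act a x = act b x" if "a \<in> L" "b \<in> L" "act a u = act b u" for a b
    using kills[of "a - b"] that left_idealD(5)[OF L] by (simp add: act_diff_left)
  have ex: "\<exists>a. a \<in> L \<and> act a u = m" for m using orbit by (metis UNIV_I imageE)
  define T where "T m = act (SOME a. a \<in> L \<and> act a u = m) x" for m
  have T: "T (act a u) = act a x" if "a \<in> L" for a
  proof -
    let ?b = "SOME b. b \<in> L \<and> act b u = act a u"
    have "?b \<in> L \<and> act ?b u = act a u" by (rule someI_ex) (use that in blast)
    then show ?thesis unfolding T_def using well_def that by blast
  qed
  have "Vector_Spaces.linear sM sM T"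
  proof (rule linear_endoI)
    show "T (m1 + m2) = T m1 + T m2" for m1 m2
      using ex[of m1] ex[of m2] T left_idealD(2)[OF L] by (metis act_add_left)
    show "T (sM c m) = sM c (T m)" for c m
      using ex[of m] T left_idealD(3)[OF L] by (metis act_scale_left)
  qed
  moreover have "T (act c m) = act c (T m)" for c m
    using ex[of m] T left_idealD(4)[OF L] by (metis act_mult)
  ultimately obtain l where "\<forall>m. T m = sM l m" using schur by blast
  then show ?thesis using T by (intro exI[of _ l]) auto
qed

lemma jacobson_density:
  "finite S \<Longrightarrow> M.independent S \<Longrightarrow> x \<notin> M.span S \<Longrightarrow>
    \<exists>a. (\<forall>s\<in>S. act a s = 0) \<and> act a x \<noteq> 0"
proof (induction S arbitrary: x rule: finite_induct)
  case empty
  then show ?case by (intro exI[of _ 1]) auto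
next
  case (insert u S)
  let ?L = "{a. \<forall>s\<in>S. act a s = 0}"
  have indS: "M.independent S" and uS: "u \<notin> M.span S"
    using insert.prems(1) insert.hyps(2) M.independent_insert by auto
  show ?case
  proof (rule ccontr)
    assume no_sep: "\<not> ?case"
    obtain a0 where a0: "a0 \<in> ?L" "act a0 u \<noteq> 0" using insert.IH[OF indS uS] by blast
    have orbit: "(\<lambda>a. act a u) ` ?L = UNIV"
      by (rule orbit_left_ideal[OF annihilator_left_ideal a0])
    have "act a x = 0" if "a \<in> ?L" "act a u = 0" for a
      using no_sep that by auto
    then obtain l where l: "\<forall>a\<in>?L. act a x = sM l (act a u)"
      using left_ideal_proportional[OF annihilator_left_ideal orbit] by blast
    have "x - sM l u \<in> M.span S"
    proof (rule ccontr)
      assume "x - sM l u \<notin> M.span S"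
      then obtain a where "a \<in> ?L" "act a (x - sM l u) \<noteq> 0"
        using insert.IH[OF indS] by blast
      with l show False by (simp add: act.diff act.scale)
    qed
    then have "x \<in> M.span (insert u S)" using M.span_breakdown_eq by blast
    with insert.prems(2) show False by blast
  qed
qed

lemma left_ideal_sum: "left_ideal sA L \<Longrightarrow> (\<And>s. s \<in> S \<Longrightarrow> f s \<in> L) \<Longrightarrow> sum f S \<in> L"
  unfolding left_ideal_def using A.subspace_sum by blast

lemma two_sided_ideal_orbit:
  assumes I: "two_sided_ideal sA I" and q: "q \<in> I" "act q m \<noteq> 0" and v: "v \<noteq> 0"
  shows "(\<lambda>a. act a v) ` I = UNIV"
proof -
  have L: "left_ideal sA I" and right: "\<And>a x. x \<in> I \<Longrightarrow> x * a \<in> I"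
    using I unfolding two_sided_ideal_def by blast+
  let ?Z = "{x. \<forall>a\<in>I. act a x = 0}"
  have "M.subspace ?Z"
    by (auto simp: M.subspace_def act.add act.scale)
  moreover have "\<forall>c. \<forall>x\<in>?Z. act c x \<in> ?Z"
    using right by (auto simp flip: act_mult)
  moreover have "?Z \<noteq> UNIV" using q by blast
  ultimately have "?Z = {0}" using submodule_trivial by blast
  then obtain a where "a \<in> I" "act a v \<noteq> 0" using v by blast
  then show ?thesis by (rule orbit_left_ideal[OF L])
qed

lemma two_sided_ideal_interpolation:
  assumes I: "two_sided_ideal sA I" and q: "q \<in> I" "act q m \<noteq> 0"
    and S: "finite S" "M.independent S"
  shows "\<exists>b\<in>I. \<forall>s\<in>S. act b s = y s"
proof -
  have L: "left_ideal sA I" and right: "\<And>a x. x \<in> I \<Longrightarrow> x * a \<in> I"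
    using I unfolding two_sided_ideal_def by blast+
  have "\<forall>s\<in>S. \<exists>a. (\<forall>t\<in>S - {s}. act a t = 0) \<and> act a s \<noteq> 0"
  proof
    fix s assume s: "s \<in> S"
    show "\<exists>a. (\<forall>t\<in>S - {s}. act a t = 0) \<and> act a s \<noteq> 0"
    proof (rule jacobson_density)
      show "finite (S - {s})" using S(1) by blast
      show "M.independent (S - {s})" using S(2) M.independent_mono by blast
      show "s \<notin> M.span (S - {s})" using S(2) s M.dependent_def by blast
    qed
  qed
  then obtain a where a: "\<forall>s\<in>S. (\<forall>t\<in>S - {s}. act (a s) t = 0) \<and> act (a s) s \<noteq> 0"
    by metis
  have "\<exists>b\<in>I. act b (act (a s) s) = y s" if "s \<in> S" for s
    using two_sided_ideal_orbit[OF I q] a that by (metis UNIV_I imageE)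
  then obtain b where b: "\<And>s. s \<in> S \<Longrightarrow> b s \<in> I \<and> act (b s) (act (a s) s) = y s" by metis
  let ?c = "\<Sum>s\<in>S. b s * a s"
  have "?c \<in> I" by (rule left_ideal_sum[OF L]) (use b right in blast)
  moreover have "act ?c t = y t" if t: "t \<in> S" for t
  proof -
    have "act ?c t = (\<Sum>s\<in>S. act (b s) (act (a s) t))" by (simp add: act_sum_left act_mult)
    also have "\<dots> = act (b t) (act (a t) t) + (\<Sum>s\<in>S - {t}. act (b s) (act (a s) t))"
      by (rule sum.remove[OF S(1) t])
    also have "(\<Sum>s\<in>S - {t}. act (b s) (act (a s) t)) = 0"
    proof (intro sum.neutral ballI)
      fix s assume "s \<in> S - {t}"
      then have "act (a s) t = 0" using a t by blast
      then show "act (b s) (act (a s) t) = 0" by simp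
    qed
    finally show ?thesis using b t by simp
  qed
  ultimately show ?thesis by blast
qed

text \<open>This is the only use of semisimplicity: a complement of the annihilator of v0 is a left
ideal of A mapped isomorphically onto M by b \<mapsto> b v0.\<close>
lemma semisimple_embedding:
  assumes semisimple: "semisimple_algebra sA"
  obtains v0 \<psi> where "v0 \<noteq> 0" "\<And>m. act (\<psi> m) v0 = m" "\<And>a m. \<psi> (act a m) = a * \<psi> m"
    "\<And>m1 m2. \<psi> (m1 + m2) = \<psi> m1 + \<psi> m2" "\<And>c m. \<psi> (sM c m) = sA c (\<psi> m)"
proof -
  obtain v0 :: 'm where v0: "v0 \<noteq> 0" using nontrivial by blast
  let ?L = "{a. act a v0 = 0}"
  have "left_ideal sA ?L" using annihilator_left_ideal[of "{v0}"] by simp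
  then obtain L' where L': "left_ideal sA L'" "?L \<inter> L' = {0}"
    "{x + y | x y. x \<in> ?L \<and> y \<in> L'} = UNIV"
    using semisimple unfolding semisimple_algebra_def by blast
  have "1 \<in> {x + y | x y. x \<in> ?L \<and> y \<in> L'}" using L'(3) by simp
  then obtain e e' where e: "e \<in> ?L" "e' \<in> L'" "1 = e + e'" by blast
  have e'_v0: "act e' v0 = v0"
  proof -
    have "v0 = act (e + e') v0" using e(3) by simp
    then show ?thesis using e(1) by (simp add: act_add_left)
  qed
  have unique: "b1 = b2" if "b1 \<in> L'" "b2 \<in> L'" "act b1 v0 = act b2 v0" for b1 b2
  proof -
    have "b1 - b2 \<in> ?L \<inter> L'" using that left_idealD(5)[OF L'(1)] by (simp add: act_diff_left)
    then show ?thesis using L'(2) by simp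
  qed
  have orbit: "(\<lambda>b. act b v0) ` L' = UNIV"
    by (rule orbit_left_ideal[OF L'(1) e(2)]) (simp add: e'_v0 v0)
  have ex1: "\<exists>!b. b \<in> L' \<and> act b v0 = m" for m
  proof -
    have "m \<in> (\<lambda>b. act b v0) ` L'" using orbit by simp
    then obtain b where "b \<in> L'" "act b v0 = m" by blast
    then show ?thesis using unique by blast
  qed
  define \<psi> where "\<psi> m = (THE b. b \<in> L' \<and> act b v0 = m)" for m
  have \<psi>: "\<psi> m \<in> L'" "act (\<psi> m) v0 = m" for m
    using theI'[OF ex1[of m]] unfolding \<psi>_def by blast+
  have \<psi>_eq: "\<psi> m = b" if "b \<in> L'" "act b v0 = m" for b m
    using unique[OF \<psi>(1) that(1)] \<psi>(2) that(2) by simp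
  show thesis
  proof (rule that[OF v0 \<psi>(2)])
    show "\<psi> (act a m) = a * \<psi> m" for a m
      by (rule \<psi>_eq) (simp_all add: left_idealD(4)[OF L'(1) \<psi>(1)] act_mult \<psi>(2))
    show "\<psi> (m1 + m2) = \<psi> m1 + \<psi> m2" for m1 m2
      by (rule \<psi>_eq) (simp_all add: left_idealD(2)[OF L'(1) \<psi>(1) \<psi>(1)] act_add_left \<psi>(2))
    show "\<psi> (sM c m) = sA c (\<psi> m)" for c m
      by (rule \<psi>_eq) (simp_all add: left_idealD(3)[OF L'(1) \<psi>(1)] act_scale_left \<psi>(2))
  qed
qed

lemma twisted_endomorphism_imp_inertia:
  assumes g: "g \<in> G" "algebra_aut sA g" and lin: "Vector_Spaces.linear sM sM F"
    and twisted: "\<And>c m. F (act c m) = act (g c) (F m)" and nz: "F m0 \<noteq> 0"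
  shows "g \<in> inertia sM act G"
proof -
  interpret F: Vector_Spaces.linear sM sM F by fact
  have g_inv: "g (inv g a) = a" for a
    using g(2) unfolding algebra_aut_def by (simp add: bij_is_surj surj_f_inv_f)
  have "{m. F m = 0} = {0}"
  proof -
    have "\<forall>c. \<forall>m\<in>{m. F m = 0}. act c m \<in> {m. F m = 0}" by (simp add: twisted)
    moreover have "{m. F m = 0} \<noteq> UNIV" using nz by blast
    ultimately show ?thesis using submodule_trivial[OF F.subspace_kernel] by blast
  qed
  then have "inj F" unfolding F.inj_iff_eq_0 by blast
  moreover have "range F = UNIV"
  proof -
    have "act c (F m) = F (act (inv g c) m)" for c m by (simp add: twisted g_inv)
    then have "\<forall>c. \<forall>x\<in>range F. act c x \<in> range F" by auto
    moreover have "range F \<noteq> {0}" using nz by blast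
    ultimately show ?thesis
      using submodule_trivial[OF F.subspace_image[OF M.subspace_UNIV]] by blast
  qed
  moreover have "F (act (inv g a) m) = act a (F m)" for a m by (simp add: twisted g_inv)
  ultimately show ?thesis
    using g(1) lin unfolding inertia_def bij_def by blast
qed

end

section \<open>Automorphisms outside the inertia group\<close>

lemma algebra_aut_sum:
  assumes "algebra_aut sA g"
  shows "g (sum f S) = (\<Sum>s\<in>S. g (f s))"
proof -
  have add: "g (x + y) = g x + g y" for x y using assms unfolding algebra_aut_def by blast
  then have "g 0 = 0" by (metis add_cancel_right_right)
  with add show ?thesis using sum_comp_morphism[of g f S] by (simp add: comp_def)
qed

lemma aut_group_sum_fixed:
  assumes G: "aut_group sA G"
  shows "sA c (\<Sum>g\<in>G. g b) \<in> fixed_alg G"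
  unfolding fixed_alg_def
proof (intro CollectI ballI)
  fix k assume k: "k \<in> G"
  have aut: "algebra_aut sA k" and comp: "\<And>g. g \<in> G \<Longrightarrow> k \<circ> g \<in> G" and inv: "inv k \<in> G"
    using G k unfolding aut_group_def by blast+
  have "bij k" using aut unfolding algebra_aut_def by blast
  have "bij_betw ((\<circ>) k) G G"
  proof (rule bij_betw_imageI)
    show "inj_on ((\<circ>) k) G"
      using \<open>bij k\<close> by (auto intro!: inj_onI simp: fun_eq_iff bij_def inj_eq)
    have "g = k \<circ> (inv k \<circ> g)" for g
      using \<open>bij k\<close> by (simp add: fun_eq_iff bij_is_surj surj_f_inv_f)
    then show "(\<circ>) k ` G = G"
      using comp G inv unfolding aut_group_def by blast
  qed
  then have "(\<Sum>g\<in>G. k (g b)) = (\<Sum>g\<in>G. g b)"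
    using sum.reindex_bij_betw[of "(\<circ>) k" G G "\<lambda>g. g b"] by simp
  moreover have "k (sA c (\<Sum>g\<in>G. g b)) = sA c (k (\<Sum>g\<in>G. g b))"
    using aut unfolding algebra_aut_def by blast
  ultimately show "k (sA c (\<Sum>g\<in>G. g b)) = sA c (\<Sum>g\<in>G. g b)"
    by (simp add: algebra_aut_sum[OF aut])
qed

definition outer_annihilator :: "(complex \<Rightarrow> 'm::ab_group_add \<Rightarrow> 'm) \<Rightarrow> ('a \<Rightarrow> 'm \<Rightarrow> 'm)
    \<Rightarrow> ('a \<Rightarrow> 'a) set \<Rightarrow> 'a set" where
  "outer_annihilator sM act G = {q. \<forall>g\<in>G - inertia sM act G. \<forall>m. act (g q) m = 0}"

locale semisimple_inertia = simple_module sA sM act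
  for sA :: "complex \<Rightarrow> 'a::ring_1 \<Rightarrow> 'a" and sM :: "complex \<Rightarrow> 'm::ab_group_add \<Rightarrow> 'm"
    and act :: "'a \<Rightarrow> 'm \<Rightarrow> 'm" +
  fixes G :: "('a \<Rightarrow> 'a) set"
  assumes semisimple: "semisimple_algebra sA" and aut_group: "aut_group sA G"
begin

abbreviation G\<^sub>M :: "('a \<Rightarrow> 'a) set" where
  "G\<^sub>M \<equiv> inertia sM act G"

lemma aut: "g \<in> G \<Longrightarrow> algebra_aut sA g"
  using aut_group unfolding aut_group_def by blast

lemma aut_hom:
  assumes "g \<in> G"
  shows "g (x + y) = g x + g y" "g (x * y) = g x * g y" "g (sA c x) = sA c (g x)" "g 0 = 0"
  using aut[OF assms] unfolding algebra_aut_def by (auto dest: spec[of _ 0])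

lemma two_sided_ideal_outer_annihilator: "two_sided_ideal sA (outer_annihilator sM act G)"
  unfolding two_sided_ideal_def left_ideal_def A.subspace_def outer_annihilator_def
  by (auto simp: aut_hom act_add_left act_scale_left act_mult)

text \<open>The image of M in A is killed by every g outside G_M: otherwise m \<mapsto> g(\<psi> m) x would
be a nonzero, hence bijective, g-twisted endomorphism of M.\<close>
lemma outer_annihilator_nontrivial: "\<exists>q\<in>outer_annihilator sM act G. \<exists>m. act q m \<noteq> 0"
proof -
  obtain v0 \<psi> where \<psi>: "v0 \<noteq> 0" "\<And>m. act (\<psi> m) v0 = m" "\<And>a m. \<psi> (act a m) = a * \<psi> m"
    "\<And>m1 m2. \<psi> (m1 + m2) = \<psi> m1 + \<psi> m2" "\<And>c m. \<psi> (sM c m) = sA c (\<psi> m)"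
    using semisimple_embedding[OF semisimple] by blast
  have "act (g (\<psi> v0)) x = 0" if g: "g \<in> G - G\<^sub>M" for g x
  proof (rule ccontr)
    assume nz: "act (g (\<psi> v0)) x \<noteq> 0"
    have gG: "g \<in> G" using g by blast
    let ?F = "\<lambda>m. act (g (\<psi> m)) x"
    have "Vector_Spaces.linear sM sM ?F"
      by (intro linear_endoI) (simp_all add: \<psi> aut_hom[OF gG] act_add_left act_scale_left)
    moreover have "?F (act c m) = act (g c) (?F m)" for c m
      by (simp add: \<psi> aut_hom[OF gG] act_mult)
    ultimately have "g \<in> G\<^sub>M"
      using twisted_endomorphism_imp_inertia[OF gG aut[OF gG]] nz by blast
    with g show False by blast
  qed
  then have "\<psi> v0 \<in> outer_annihilator sM act G" unfolding outer_annihilator_def by blast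
  with \<psi>(1,2) show ?thesis by metis
qed

lemma outer_annihilator_interpolation:
  "finite S \<Longrightarrow> M.independent S \<Longrightarrow> \<exists>b\<in>outer_annihilator sM act G. \<forall>s\<in>S. act b s = y s"
  using two_sided_ideal_interpolation[OF two_sided_ideal_outer_annihilator]
    outer_annihilator_nontrivial by blast

end

section \<open>Multiplicity spaces\<close>

locale multiplicity_setting = semisimple_inertia sA sM act G
  for sA :: "complex \<Rightarrow> 'a::ring_1 \<Rightarrow> 'a" and sM :: "complex \<Rightarrow> 'm::ab_group_add \<Rightarrow> 'm"
    and act :: "'a \<Rightarrow> 'm \<Rightarrow> 'm" and G :: "('a \<Rightarrow> 'a) set" +
  fixes \<phi> :: "('a \<Rightarrow> 'a) \<Rightarrow> 'm \<Rightarrow> 'm" and sW :: "complex \<Rightarrow> 'w::ab_group_add \<Rightarrow> 'w"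
    and \<rho> :: "('a \<Rightarrow> 'a) \<Rightarrow> 'w \<Rightarrow> 'w" and \<alpha> :: "('a \<Rightarrow> 'a) \<Rightarrow> ('a \<Rightarrow> 'a) \<Rightarrow> complex"
  assumes phi_iso: "\<forall>h\<in>G\<^sub>M. Vector_Spaces.linear sM sM (\<phi> h) \<and> bij (\<phi> h) \<and>
                    (\<forall>a m. \<phi> h (act a m) = act (h a) (\<phi> h m))"
    and W_simple: "simple_twisted_module sW \<rho> G\<^sub>M \<alpha>"
begin

abbreviation hom :: "('w \<Rightarrow> 'm) \<Rightarrow> bool" where
  "hom f \<equiv> twisted_hom sW sM \<rho> \<phi> G\<^sub>M f"

sublocale W: vector_space sW
  using W_simple unfolding simple_twisted_module_def twisted_module_def by blast

lemma phi_linear: "h \<in> G\<^sub>M \<Longrightarrow> Vector_Spaces.linear sM sM (\<phi> h)"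
  and phi_bij: "h \<in> G\<^sub>M \<Longrightarrow> bij (\<phi> h)"
  and phi_act: "h \<in> G\<^sub>M \<Longrightarrow> \<phi> h (act a m) = act (h a) (\<phi> h m)"
  using phi_iso by blast+

lemma phi_add: "h \<in> G\<^sub>M \<Longrightarrow> \<phi> h (x + y) = \<phi> h x + \<phi> h y"
  and phi_scale: "h \<in> G\<^sub>M \<Longrightarrow> \<phi> h (sM c x) = sM c (\<phi> h x)"
  using phi_linear unfolding Vector_Spaces.linear_iff by blast+

lemma phi_zero: "h \<in> G\<^sub>M \<Longrightarrow> \<phi> h 0 = 0"
  using phi_add[of h 0 0] by simp

lemma rho_linear: "h \<in> G\<^sub>M \<Longrightarrow> Vector_Spaces.linear sW sW (\<rho> h)"
  using W_simple unfolding simple_twisted_module_def twisted_module_def by blast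

lemma W_fin_dim: "fin_dim sW"
  using W_simple unfolding simple_twisted_module_def by blast

lemma W_submodule_trivial:
  "W.subspace N \<Longrightarrow> \<forall>h\<in>G\<^sub>M. \<forall>x\<in>N. \<rho> h x \<in> N \<Longrightarrow> N = {0} \<or> N = UNIV"
  using W_simple unfolding simple_twisted_module_def by blast

lemma hom_linear: "hom f \<Longrightarrow> Vector_Spaces.linear sW sM f"
  and hom_commute: "hom f \<Longrightarrow> h \<in> G\<^sub>M \<Longrightarrow> f (\<rho> h x) = \<phi> h (f x)"
  unfolding twisted_hom_def by blast+

lemma hom_add_right: "hom f \<Longrightarrow> f (x + y) = f x + f y"
  and hom_scale_right: "hom f \<Longrightarrow> f (sW c x) = sM c (f x)"
  using hom_linear unfolding Vector_Spaces.linear_iff by blast+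

lemma hom_zero_right: "hom f \<Longrightarrow> f 0 = 0"
  using hom_add_right[of f 0 0] by simp

lemma homI:
  assumes "\<And>x y. f (x + y) = f x + f y" "\<And>c x. f (sW c x) = sM c (f x)"
    and "\<And>h x. h \<in> G\<^sub>M \<Longrightarrow> f (\<rho> h x) = \<phi> h (f x)"
  shows "hom f"
  unfolding twisted_hom_def Vector_Spaces.linear_iff
  using assms W.vector_space_axioms M.vector_space_axioms by blast

lemma hom_add: "hom f \<Longrightarrow> hom g \<Longrightarrow> hom (\<lambda>x. f x + g x)"
  by (intro homI)
    (simp_all add: hom_add_right hom_scale_right hom_commute phi_add M.scale_right_distrib
      ac_simps)

lemma hom_zero: "hom (\<lambda>x. 0)"
  by (intro homI) (simp_all add: phi_zero)

lemma hom_scale: "hom f \<Longrightarrow> hom (\<lambda>x. sM c (f x))"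
  by (intro homI)
    (simp_all add: hom_add_right hom_scale_right hom_commute phi_scale M.scale_right_distrib
      mult.commute)

lemma hom_act_fixed:
  assumes f: "hom f" and a: "a \<in> fixed_alg G"
  shows "hom (\<lambda>x. act a (f x))"
proof (rule homI)
  interpret f: Vector_Spaces.linear sW sM f by (rule hom_linear[OF f])
  show "act a (f (x + y)) = act a (f x) + act a (f y)" for x y by (simp add: f.add act.add)
  show "act a (f (sW c x)) = sM c (act a (f x))" for c x by (simp add: f.scale act.scale)
  show "act a (f (\<rho> h x)) = \<phi> h (act a (f x))" if h: "h \<in> G\<^sub>M" for h x
  proof -
    have "h a = a" using a h unfolding fixed_alg_def inertia_def by blast
    then show ?thesis using hom_commute[OF f h] phi_act[OF h] by simp
  qed
qed

lemma hom_inj: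
  assumes f: "hom f" and nz: "f x0 \<noteq> 0"
  shows "inj f"
proof -
  interpret f: Vector_Spaces.linear sW sM f by (rule hom_linear[OF f])
  have "\<forall>h\<in>G\<^sub>M. \<forall>x\<in>{x. f x = 0}. \<rho> h x \<in> {x. f x = 0}"
    by (simp add: hom_commute[OF f] phi_zero)
  moreover have "{x. f x = 0} \<noteq> UNIV" using nz by blast
  ultimately have "{x. f x = 0} = {0}" using W_submodule_trivial[OF f.subspace_kernel] by blast
  then show ?thesis unfolding f.inj_iff_eq_0 by blast
qed

lemma rho_surj:
  assumes f: "hom f" "inj f" and h: "h \<in> G\<^sub>M"
  shows "surj (\<rho> h)"
proof -
  obtain B where "finite_dimensional_vector_space sW B"
    using fin_dim_finite_dimensional[OF W_fin_dim] by blast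
  then interpret W: finite_dimensional_vector_space sW B .
  have "inj (\<phi> h \<circ> f)" using f(2) phi_bij[OF h] by (simp add: inj_compose bij_is_inj)
  then have "inj (f \<circ> \<rho> h)" using hom_commute[OF f(1) h] by (simp add: comp_def)
  then have "inj (\<rho> h)" using inj_on_imageI2 by blast
  then show ?thesis using W.linear_inj_imp_surj[OF rho_linear[OF h]] by blast
qed

lemma hom_realised_by_outer_annihilator:
  assumes f0: "hom f0" "inj f0" and f: "hom f"
  shows "\<exists>b\<in>outer_annihilator sM act G. \<forall>x. act b (f0 x) = f x"
proof -
  obtain B where "finite_dimensional_vector_space sW B"
    using fin_dim_finite_dimensional[OF W_fin_dim] by blast
  then interpret W: finite_dimensional_vector_space sW B .
  interpret f0: Vector_Spaces.linear sW sM f0 by (rule hom_linear[OF f0(1)])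
  have "M.independent (f0 ` B)"
    using f0.independent_inj_image[OF W.independent_Basis f0(2)] .
  then obtain b where b: "b \<in> outer_annihilator sM act G" "\<forall>s\<in>f0 ` B. act b s = f (inv f0 s)"
    using outer_annihilator_interpolation[OF finite_imageI[OF W.finite_Basis],
        of f0 "\<lambda>s. f (inv f0 s)"]
    by blast
  have "vector_space_pair sW sM" by unfold_locales
  moreover have "Vector_Spaces.linear sW sM (act b \<circ> f0)"
    using Vector_Spaces.linear_compose[OF hom_linear[OF f0(1)] act_linear] .
  moreover have "\<forall>x\<in>B. (act b \<circ> f0) x = f x" using b(2) f0(2) by (simp add: inv_f_f)
  ultimately have "act b (f0 x) = f x" for x
    using vector_space_pair.linear_eq_on[OF _ _ hom_linear[OF f], of "act b \<circ> f0" x B]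
      W.span_Basis by simp
  with b(1) show ?thesis by blast
qed

text \<open>Average b over G: the terms with g outside G_M vanish on M, and each g in G_M contributes
f w, transported along \<phi> g.\<close>
lemma hom_realised_by_fixed:
  assumes f0: "hom f0" "inj f0" and f: "hom f"
  shows "\<exists>a\<in>fixed_alg G. act a (f0 w) = f w"
proof -
  obtain b where b: "b \<in> outer_annihilator sM act G" "\<And>x. act b (f0 x) = f x"
    using hom_realised_by_outer_annihilator[OF f0 f] by blast
  have G: "finite G" "id \<in> G" using aut_group unfolding aut_group_def by blast+
  have inertia_sub: "G\<^sub>M \<subseteq> G" unfolding inertia_def by blast
  have "id \<in> G\<^sub>M" unfolding inertia_def using G(2) M.linear_id by auto
  then have card: "card G\<^sub>M \<noteq> 0" using finite_subset[OF inertia_sub G(1)] by auto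
  have inner: "act (h b) (f0 w) = f w" if h: "h \<in> G\<^sub>M" for h
  proof -
    obtain v where v: "\<rho> h v = w" using rho_surj[OF f0 h] by (metis surjD)
    have "act (h b) (f0 w) = act (h b) (\<phi> h (f0 v))"
      using hom_commute[OF f0(1) h] v[symmetric] by simp
    also have "\<dots> = \<phi> h (f v)" using phi_act[OF h, symmetric] b(2) by simp
    also have "\<dots> = f w" using hom_commute[OF f h] v[symmetric] by simp
    finally show ?thesis .
  qed
  have outer: "act (g b) (f0 w) = 0" if "g \<in> G - G\<^sub>M" for g
    using b(1) that unfolding outer_annihilator_def by blast
  define a where "a = sA (inverse (of_nat (card G\<^sub>M))) (\<Sum>g\<in>G. g b)"
  have "act (\<Sum>g\<in>G. g b) (f0 w)
      = (\<Sum>g\<in>G - G\<^sub>M. act (g b) (f0 w)) + (\<Sum>g\<in>G\<^sub>M. act (g b) (f0 w))"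
    unfolding act_sum_left by (rule sum.subset_diff[OF inertia_sub G(1)])
  also have "\<dots> = sM (of_nat (card G\<^sub>M)) (f w)"
    by (simp add: outer inner M.sum_constant_scale)
  finally have "act a (f0 w) = f w" unfolding a_def using card by (simp add: act_scale_left)
  moreover have "a \<in> fixed_alg G" unfolding a_def by (rule aut_group_sum_fixed[OF aut_group])
  ultimately show ?thesis by blast
qed

lemma mult_space_simple:
  assumes occurs: "\<exists>f. hom f \<and> inj f" and w: "w \<noteq> 0"
  shows "simple_over sM act (fixed_alg G) (mult_space sW sM \<rho> \<phi> G\<^sub>M w)"
proof -
  let ?Mw = "mult_space sW sM \<rho> \<phi> G\<^sub>M w"
  have sub: "M.subspace ?Mw"
    unfolding mult_space_def
    by (rule M.subspaceI) (use hom_zero hom_add hom_scale in \<open>fastforce+\<close>)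
  have stable: "\<forall>a\<in>fixed_alg G. \<forall>m\<in>?Mw. act a m \<in> ?Mw"
    unfolding mult_space_def using hom_act_fixed by fastforce
  obtain f where f: "hom f" "inj f" using occurs by blast
  have "f w \<noteq> 0"
    using f w hom_zero_right[OF f(1)] by (metis injD)
  then have nz: "?Mw \<noteq> {0}" using f(1) unfolding mult_space_def by blast
  have "N = ?Mw" if N: "N \<subseteq> ?Mw" "M.subspace N" "\<forall>a\<in>fixed_alg G. \<forall>m\<in>N. act a m \<in> N"
    and "N \<noteq> {0}" for N
  proof
    obtain n0 where n0: "n0 \<in> N" "n0 \<noteq> 0" using \<open>N \<noteq> {0}\<close> M.subspace_0[OF N(2)] by blast
    then obtain f0 where f0: "hom f0" "n0 = f0 w" using N(1) unfolding mult_space_def by blast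
    have "inj f0" using hom_inj f0 n0(2) by blast
    show "?Mw \<subseteq> N"
    proof
      fix m assume "m \<in> ?Mw"
      then obtain f' where "hom f'" "m = f' w" unfolding mult_space_def by blast
      then obtain a where "a \<in> fixed_alg G" "act a n0 = m"
        using hom_realised_by_fixed[OF f0(1) \<open>inj f0\<close>] f0(2) by metis
      then show "m \<in> N" using N(3) n0(1) by blast
    qed
  qed (fact N(1))
  then show ?thesis unfolding simple_over_def using sub stable nz by blast
qed

end

theorem theorem3p5:
  fixes sA :: "complex \<Rightarrow> 'a::ring_1 \<Rightarrow> 'a"
    and G :: "('a \<Rightarrow> 'a) set"
    and sM :: "complex \<Rightarrow> 'm::ab_group_add \<Rightarrow> 'm"
    and act :: "'a \<Rightarrow> 'm \<Rightarrow> 'm"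
    and \<phi> :: "('a \<Rightarrow> 'a) \<Rightarrow> 'm \<Rightarrow> 'm"
    and \<alpha> :: "('a \<Rightarrow> 'a) \<Rightarrow> ('a \<Rightarrow> 'a) \<Rightarrow> complex"
    and sW :: "complex \<Rightarrow> 'w::ab_group_add \<Rightarrow> 'w"
    and \<rho> :: "('a \<Rightarrow> 'a) \<Rightarrow> 'w \<Rightarrow> 'w"
    and w :: 'w
  assumes A: "semisimple_algebra sA"
    and G: "aut_group sA G"
    and M_mod: "A_module sA sM act"
    and M_fd: "fin_dim sM"
    and M_simple: "simple_over sM act UNIV UNIV"
    and phi_iso: "\<forall>h\<in>inertia sM act G. Vector_Spaces.linear sM sM (\<phi> h) \<and> bij (\<phi> h) \<and>
                    (\<forall>a m. \<phi> h (act a m) = act (h a) (\<phi> h m))"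
    and phi_one: "\<phi> id = id"
    and cocycle: "\<forall>h\<in>inertia sM act G. \<forall>k\<in>inertia sM act G. \<forall>m.
                    \<phi> h (\<phi> k m) = sM (\<alpha> h k) (\<phi> (h \<circ> k) m)"
    and W_simple: "simple_twisted_module sW \<rho> (inertia sM act G) \<alpha>"
    and W_occurs: "\<exists>f. twisted_hom sW sM \<rho> \<phi> (inertia sM act G) f \<and> inj f"
    and w_nz: "w \<noteq> 0"
  shows "simple_over sM act (fixed_alg G) (mult_space sW sM \<rho> \<phi> (inertia sM act G) w)"
proof -
  have "complex_algebra sA" using A unfolding semisimple_algebra_def by blast
  then interpret multiplicity_setting sA sM act G \<phi> sW \<rho> \<alpha>
    using A G M_mod M_fd M_simple phi_iso W_simple by unfold_locales
  show ?thesis using W_occurs w_nz by (rule mult_space_simple)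
qed

end
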